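(* For every formula $\chi$ and every finite closure $\Sigma$ of $\chi$ (i.e. a finite closure with $\chi\in\Sigma$): if $\mathbf{PTKv}^{\ast}(\Sigma)\nvdash\neg\chi$, then $\chi$ is satisfiable, i.e. there exist a model $M$ and a world $w$ with $M,w\models\chi$.
   Context: Language and semantics. Fix countable sets $\mathsf{Prop}$ (propositional variables), $\mathsf{Term}$ (atomic terms) and a finite set of agents $\mathcal{A}$. $\Theta_K=[0,1]\cap\mathbb{Q}$, $\Theta_V^+=(\frac12,1]\cap\mathbb{Q}$. Formulas: $\varphi::= p\mid t=s\mid\neg\varphi\mid(\varphi\to\psi)\mid K_i^\theta\varphi\mid Kv_i^\eta(t)$ ($\theta\in\Theta_K$, $\eta\in\Theta_V^+$). A model is $M=(W,D,\{P_i\}_{i\in\mathcal{A}},V,\mathsf{val})$ with $W,D$ nonempty, each $P_i(w)$ a countably additive probability measure on the powerset of $W$, $V:W\times\mathsf{Prop}\to\{0,1\}$, $\mathsf{val}:W\times\mathsf{Term}\to D$; $M,w\models p$ iff $V(w,p)=1$; $M,w\models t=s$ iff $\mathsf{val}(w,t)=\mathsf{val}(w,s)$; Boolean clauses as usual; $M,w\models K_i^\theta\varphi$ iff $P_i(w)(\{u\mid M,u\models\varphi\})\ge\theta$; $M,w\models Kv_i^\eta(t)$ iff there is a unique $d\in D$ with $P_i(w)(\{u\mid\mathsf{val}(u,t)=d\})\ge\eta$. Proof systems. $\mathbf{PTKv}^{+}$ is the Hilbert system with rules Modus Ponens and $\mathrm{Nec}_K$ (from $\varphi$ infer $K_i^\theta\varphi$)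 and axiom schemata: propositional tautologies; $t=t$; $t=s\to s=t$; $(t=s\wedge s=u)\to t=u$; $t=s\to((t=u)\leftrightarrow(s=u))$; $K_i^{\theta'}\varphi\to K_i^\theta\varphi$ ($\theta\le\theta'$); $K_i^\alpha(\varphi\to\psi)\to(K_i^\beta\varphi\to K_i^{\max\{0,\alpha+\beta-1\}}\psi)$; $K_i^\alpha\varphi\to\neg K_i^\beta\neg\varphi$ ($\alpha+\beta>1$); $K_i^0\varphi$; $K_i^1(t=s)\to(K_i^\theta(t=u)\leftrightarrow K_i^\theta(s=u))$; $K_i^1(t=s)\to(Kv_i^\eta(t)\leftrightarrow Kv_i^\eta(s))$; $K_i^1(\varphi\leftrightarrow\psi)\to(K_i^\theta\varphi\leftrightarrow K_i^\theta\psi)$; $K_i^\alpha\varphi\wedge K_i^\beta\psi\wedge K_i^1\neg(\varphi\wedge\psi)\to K_i^{\alpha+\beta}(\varphi\vee\psi)$ ($\alpha+\beta\le1$); $Kv_i^\eta(t)\to Kv_i^\zeta(t)$ ($\zeta\le\eta$, both in $\Theta_V^+$). Finite closure: a finite set $\Sigma$ of formulas closed under subformulas and single negations (if $\varphi\in\Sigma$ then $\neg\varphi\in\Sigma$ unless $\varphi$ is itself a negation $\neg\psi$ with $\psi\in\Sigma$), containing $t=s$ and $\neg(t=s)$ for all $t,s\in T_\Sigma$ (the atomic terms occurring in $\Sigma$), with all thresholds from a finite set of rationals. $\mathsf{Type}(\Sigma)$ is the set of $\Gamma\subseteq\Sigma$ that are $\mathbf{PTKv}^{+}$-consistent ($\mathbf{PTKv}^{+}\nvdash\neg\bigwedge\Gamma$)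 and saturated (for each $\varphi\in\Sigma$, $\varphi\in\Gamma$ or $\neg\varphi\in\Gamma$). Constraint systems. Let $K=\{1,\dots,|T_\Sigma|\}$. For $\Delta\in\mathsf{Type}(\Sigma)$, $\mathcal{F}(\Delta)=\{f:T_\Sigma\to K\mid \forall t,s,\ f(t)=f(s)\iff (t=s)\in\Delta\}$. $\Lambda_i^\Gamma$ is the set of formulas in $\Gamma$ of the forms $K_i^\theta\varphi$, $\neg K_i^\theta\varphi$, $Kv_i^\eta(t)$, $\neg Kv_i^\eta(t)$. For nonempty $S\subseteq\mathsf{Type}(\Sigma)$ with $\Gamma\in S$, $\mathsf{FC}(\Gamma,S,i)$ in real variables $z_{\Delta,f}$ ($\Delta\in S$, $f\in\mathcal{F}(\Delta)$) requires: $z_{\Delta,f}\ge0$; $\sum_{\Delta\in S}\sum_f z_{\Delta,f}=1$; for $K_i^\theta\varphi\in\Gamma$: $\sum_{\Delta\in S,\varphi\in\Delta}\sum_f z_{\Delta,f}\ge\theta$; for $\neg K_i^\theta\varphi\in\Gamma$: that sum $<\theta$; for $Kv_i^\eta(t)\in\Gamma$: some $k\in K$ has $\sum_{\Delta\in S}\sum_{f(t)=k}z_{\Delta,f}\ge\eta$; for $\neg Kv_i^\eta(t)\in\Gamma$: every $k\in K$ has $\sum_{\Delta\in S}\sum_{f(t)=k}z_{\Delta,f}<\eta$. Feasible means some real assignment satisfies all requirements. Refinement. $\mathcal{T}_0=\mathsf{Type}(\Sigma)$, $\mathcal{T}_{\ell+1}=\{\Delta\in\mathcal{T}_\ell\mid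 \mathsf{FC}(\Delta,\mathcal{T}_\ell,i)\text{ feasible for all } i\}$; it stabilizes at $\mathsf{Type}^\ast(\Sigma)$. For each $\Gamma\in\mathsf{Type}(\Sigma)\setminus\mathsf{Type}^\ast(\Sigma)$, with $\Gamma\in\mathcal{T}_\ell\setminus\mathcal{T}_{\ell+1}$, fix an agent $i_\Gamma$ with $\mathsf{FC}(\Gamma,\mathcal{T}_\ell,i_\Gamma)$ infeasible. $\mathbf{PTKv}^\ast(\Sigma)$ is $\mathbf{PTKv}^{+}$ plus the axioms $\neg\bigwedge\Lambda_{i_\Gamma}^\Gamma$ for all such $\Gamma$. *)

theory Defs
  imports "HOL-Probability.Probability"
begin

text \<open>Thresholds are rationals; the admissible ranges (Theta_K = [0,1], Theta_V^+ = (1/2,1])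
  are imposed by the well-formedness predicate wf_form.\<close>

datatype ('p, 't, 'a) form =
    PVar 'p
  | Eq 't 't
  | Neg "('p, 't, 'a) form"
  | Imp "('p, 't, 'a) form" "('p, 't, 'a) form"
  | Kn 'a rat "('p, 't, 'a) form"
  | Kv 'a rat 't

primrec wf_form :: "('p, 't, 'a) form \<Rightarrow> bool" where
  "wf_form (PVar p) = True"
| "wf_form (Eq t s) = True"
| "wf_form (Neg \<phi>) = wf_form \<phi>"
| "wf_form (Imp \<phi> \<psi>) = (wf_form \<phi> \<and> wf_form \<psi>)"
| "wf_form (Kn i \<theta> \<phi>) = (0 \<le> \<theta> \<and> \<theta> \<le> 1 \<and> wf_form \<phi>)"
| "wf_form (Kv i \<eta> t) = (1/2 < \<eta> \<and> \<eta> \<le> 1)"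

definition And :: "('p, 't, 'a) form \<Rightarrow> ('p, 't, 'a) form \<Rightarrow> ('p, 't, 'a) form" where
  "And \<phi> \<psi> = Neg (Imp \<phi> (Neg \<psi>))"

definition Or :: "('p, 't, 'a) form \<Rightarrow> ('p, 't, 'a) form \<Rightarrow> ('p, 't, 'a) form" where
  "Or \<phi> \<psi> = Imp (Neg \<phi>) \<psi>"

definition Iff :: "('p, 't, 'a) form \<Rightarrow> ('p, 't, 'a) form \<Rightarrow> ('p, 't, 'a) form" where
  "Iff \<phi> \<psi> = And (Imp \<phi> \<psi>) (Imp \<psi> \<phi>)"

text \<open>Verum, used only as the empty conjunction.\<close>
definition Top :: "('p, 't, 'a) form" where
  "Top = Imp (Eq undefined undefined) (Eq undefined undefined)"

fun conj_list :: "('p, 't, 'a) form list \<Rightarrow> ('p, 't, 'a) form" where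
  "conj_list [] = Top"
| "conj_list [\<phi>] = \<phi>"
| "conj_list (\<phi> # \<psi> # xs) = And \<phi> (conj_list (\<psi> # xs))"

text \<open>Conjunction of a finite set of formulas (order is immaterial for derivability).\<close>
definition Conj :: "('p, 't, 'a) form set \<Rightarrow> ('p, 't, 'a) form" where
  "Conj \<Gamma> = conj_list (SOME xs. set xs = \<Gamma>)"

datatype ('w, 'd, 'a, 'p, 't) model =
  Model (W: "'w set") (Dom: "'d set") (Pr: "'a \<Rightarrow> 'w \<Rightarrow> 'w measure")
        (Vl: "'w \<Rightarrow> 'p \<Rightarrow> bool") (vl: "'w \<Rightarrow> 't \<Rightarrow> 'd")

definition is_model :: "('w, 'd, 'a, 'p, 't) model \<Rightarrow> bool" where
  "is_model M \<longleftrightarrow> W M \<noteq> {} \<and> Dom M \<noteq> {}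
     \<and> (\<forall>i. \<forall>w\<in>W M. prob_space (Pr M i w) \<and> space (Pr M i w) = W M
                     \<and> sets (Pr M i w) = Pow (W M))
     \<and> (\<forall>w\<in>W M. \<forall>t. vl M w t \<in> Dom M)"

primrec sat :: "('w, 'd, 'a, 'p, 't) model \<Rightarrow> 'w \<Rightarrow> ('p, 't, 'a) form \<Rightarrow> bool" where
  "sat M w (PVar p) = Vl M w p"
| "sat M w (Eq t s) = (vl M w t = vl M w s)"
| "sat M w (Neg \<phi>) = (\<not> sat M w \<phi>)"
| "sat M w (Imp \<phi> \<psi>) = (sat M w \<phi> \<longrightarrow> sat M w \<psi>)"
| "sat M w (Kn i \<theta> \<phi>) = (measure (Pr M i w) {u \<in> W M. sat M u \<phi>} \<ge> real_of_rat \<theta>)"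
| "sat M w (Kv i \<eta> t) = (\<exists>!d. d \<in> Dom M \<and> measure (Pr M i w) {u \<in> W M. vl M u t = d} \<ge> real_of_rat \<eta>)"

primrec peval :: "(('p, 't, 'a) form \<Rightarrow> bool) \<Rightarrow> ('p, 't, 'a) form \<Rightarrow> bool" where
  "peval v (PVar p) = v (PVar p)"
| "peval v (Eq t s) = v (Eq t s)"
| "peval v (Neg \<phi>) = (\<not> peval v \<phi>)"
| "peval v (Imp \<phi> \<psi>) = (peval v \<phi> \<longrightarrow> peval v \<psi>)"
| "peval v (Kn i \<theta> \<phi>) = v (Kn i \<theta> \<phi>)"
| "peval v (Kv i \<eta> t) = v (Kv i \<eta> t)"

definition tautology :: "('p, 't, 'a) form \<Rightarrow> bool" where
  "tautology \<phi> \<longleftrightarrow> (\<forall>v. peval v \<phi>)"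

text \<open>Axiom schemata of PTKv+ (threshold side conditions; the ranges of thresholds are
  enforced by requiring the instance to be well-formed in derivable).\<close>
inductive ax :: "('p, 't, 'a) form \<Rightarrow> bool" where
  taut: "tautology \<phi> \<Longrightarrow> ax \<phi>"
| eq_refl: "ax (Eq t t)"
| eq_sym: "ax (Imp (Eq t s) (Eq s t))"
| eq_trans: "ax (Imp (And (Eq t s) (Eq s u)) (Eq t u))"
| eq_subst: "ax (Imp (Eq t s) (Iff (Eq t u) (Eq s u)))"
| mono: "\<theta> \<le> \<theta>' \<Longrightarrow> ax (Imp (Kn i \<theta>' \<phi>) (Kn i \<theta> \<phi>))"
| kdist: "ax (Imp (Kn i \<alpha> (Imp \<phi> \<psi>)) (Imp (Kn i \<beta> \<phi>) (Kn i (max 0 (\<alpha> + \<beta> - 1)) \<psi>)))"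
| kcons: "\<alpha> + \<beta> > 1 \<Longrightarrow> ax (Imp (Kn i \<alpha> \<phi>) (Neg (Kn i \<beta> (Neg \<phi>))))"
| kzero: "ax (Kn i 0 \<phi>)"
| keq: "ax (Imp (Kn i 1 (Eq t s)) (Iff (Kn i \<theta> (Eq t u)) (Kn i \<theta> (Eq s u))))"
| kveq: "ax (Imp (Kn i 1 (Eq t s)) (Iff (Kv i \<eta> t) (Kv i \<eta> s)))"
| kiff: "ax (Imp (Kn i 1 (Iff \<phi> \<psi>)) (Iff (Kn i \<theta> \<phi>) (Kn i \<theta> \<psi>)))"
| kadd: "\<alpha> + \<beta> \<le> 1 \<Longrightarrow>
     ax (Imp (And (And (Kn i \<alpha> \<phi>) (Kn i \<beta> \<psi>)) (Kn i 1 (Neg (And \<phi> \<psi>))))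
             (Kn i (\<alpha> + \<beta>) (Or \<phi> \<psi>)))"
| kvmono: "\<zeta> \<le> \<eta> \<Longrightarrow> ax (Imp (Kv i \<eta> t) (Kv i \<zeta> t))"

inductive derivable :: "('p, 't, 'a) form set \<Rightarrow> ('p, 't, 'a) form \<Rightarrow> bool" for A where
  Ax: "ax \<phi> \<Longrightarrow> wf_form \<phi> \<Longrightarrow> derivable A \<phi>"
| Extra: "\<phi> \<in> A \<Longrightarrow> derivable A \<phi>"
| MP: "derivable A (Imp \<phi> \<psi>) \<Longrightarrow> derivable A \<phi> \<Longrightarrow> derivable A \<psi>"
| Nec: "derivable A \<phi> \<Longrightarrow> 0 \<le> \<theta> \<Longrightarrow> \<theta> \<le> 1 \<Longrightarrow> derivable A (Kn i \<theta> \<phi>)"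

abbreviation PTKv_plus :: "('p, 't, 'a) form \<Rightarrow> bool" where
  "PTKv_plus \<phi> \<equiv> derivable {} \<phi>"

primrec subforms :: "('p, 't, 'a) form \<Rightarrow> ('p, 't, 'a) form set" where
  "subforms (PVar p) = {PVar p}"
| "subforms (Eq t s) = {Eq t s}"
| "subforms (Neg \<phi>) = insert (Neg \<phi>) (subforms \<phi>)"
| "subforms (Imp \<phi> \<psi>) = insert (Imp \<phi> \<psi>) (subforms \<phi> \<union> subforms \<psi>)"
| "subforms (Kn i \<theta> \<phi>) = insert (Kn i \<theta> \<phi>) (subforms \<phi>)"
| "subforms (Kv i \<eta> t) = {Kv i \<eta> t}"

primrec terms_of :: "('p, 't, 'a) form \<Rightarrow> 't set" where
  "terms_of (PVar p) = {}"
| "terms_of (Eq t s) = {t, s}"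
| "terms_of (Neg \<phi>) = terms_of \<phi>"
| "terms_of (Imp \<phi> \<psi>) = terms_of \<phi> \<union> terms_of \<psi>"
| "terms_of (Kn i \<theta> \<phi>) = terms_of \<phi>"
| "terms_of (Kv i \<eta> t) = {t}"

definition T_of :: "('p, 't, 'a) form set \<Rightarrow> 't set" where
  "T_of \<Sigma> = (\<Union>\<phi>\<in>\<Sigma>. terms_of \<phi>)"

text \<open>A finite closure. (Thresholds of a finite set of formulas automatically come from
  a finite set of rationals.)\<close>
definition finite_closure :: "('p, 't, 'a) form set \<Rightarrow> bool" where
  "finite_closure \<Sigma> \<longleftrightarrow> finite \<Sigma> \<and> (\<forall>\<phi>\<in>\<Sigma>. wf_form \<phi>)
     \<and> (\<forall>\<phi>\<in>\<Sigma>. subforms \<phi> \<subseteq> \<Sigma>)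
     \<and> (\<forall>\<phi>\<in>\<Sigma>. \<not> (\<exists>\<psi>. \<phi> = Neg \<psi> \<and> \<psi> \<in> \<Sigma>) \<longrightarrow> Neg \<phi> \<in> \<Sigma>)
     \<and> (\<forall>t\<in>T_of \<Sigma>. \<forall>s\<in>T_of \<Sigma>. Eq t s \<in> \<Sigma> \<and> Neg (Eq t s) \<in> \<Sigma>)"

fun sneg :: "('p, 't, 'a) form \<Rightarrow> ('p, 't, 'a) form" where
  "sneg (Neg \<psi>) = \<psi>"
| "sneg \<phi> = Neg \<phi>"

definition Types :: "('p, 't, 'a) form set \<Rightarrow> ('p, 't, 'a) form set set" where
  "Types \<Sigma> = {\<Gamma>. \<Gamma> \<subseteq> \<Sigma> \<and> \<not> PTKv_plus (Neg (Conj \<Gamma>))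
                 \<and> (\<forall>\<phi>\<in>\<Sigma>. \<phi> \<in> \<Gamma> \<or> sneg \<phi> \<in> \<Gamma>)}"

text \<open>Functions f : T_Sigma -> K = {1..|T_Sigma|}, represented as total functions that are 0
  outside T_Sigma.\<close>
definition Fs :: "('p, 't, 'a) form set \<Rightarrow> ('p, 't, 'a) form set \<Rightarrow> ('t \<Rightarrow> nat) set" where
  "Fs \<Sigma> \<Delta> = {f. (\<forall>t\<in>T_of \<Sigma>. f t \<in> {1..card (T_of \<Sigma>)}) \<and> (\<forall>t. t \<notin> T_of \<Sigma> \<longrightarrow> f t = 0)
                 \<and> (\<forall>t\<in>T_of \<Sigma>. \<forall>s\<in>T_of \<Sigma>. f t = f s \<longleftrightarrow> Eq t s \<in> \<Delta>)}"

definition FC_index :: "('p, 't, 'a) form set \<Rightarrow> ('p, 't, 'a) form set set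
     \<Rightarrow> (('p, 't, 'a) form set \<times> ('t \<Rightarrow> nat)) set" where
  "FC_index \<Sigma> S = {(\<Delta>, f). \<Delta> \<in> S \<and> f \<in> Fs \<Sigma> \<Delta>}"

definition FC_feasible :: "('p, 't, 'a) form set \<Rightarrow> ('p, 't, 'a) form set
     \<Rightarrow> ('p, 't, 'a) form set set \<Rightarrow> 'a \<Rightarrow> bool" where
  "FC_feasible \<Sigma> \<Gamma> S i \<longleftrightarrow> (\<exists>z :: ('p, 't, 'a) form set \<times> ('t \<Rightarrow> nat) \<Rightarrow> real.
      (\<forall>x\<in>FC_index \<Sigma> S. z x \<ge> 0)
    \<and> (\<Sum>x\<in>FC_index \<Sigma> S. z x) = 1
    \<and> (\<forall>\<theta> \<phi>. Kn i \<theta> \<phi> \<in> \<Gamma> \<longrightarrow>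
          (\<Sum>x\<in>{(\<Delta>, f)\<in>FC_index \<Sigma> S. \<phi> \<in> \<Delta>}. z x) \<ge> real_of_rat \<theta>)
    \<and> (\<forall>\<theta> \<phi>. Neg (Kn i \<theta> \<phi>) \<in> \<Gamma> \<longrightarrow>
          (\<Sum>x\<in>{(\<Delta>, f)\<in>FC_index \<Sigma> S. \<phi> \<in> \<Delta>}. z x) < real_of_rat \<theta>)
    \<and> (\<forall>\<eta> t. Kv i \<eta> t \<in> \<Gamma> \<longrightarrow> (\<exists>k\<in>{1..card (T_of \<Sigma>)}.
          (\<Sum>x\<in>{(\<Delta>, f)\<in>FC_index \<Sigma> S. f t = k}. z x) \<ge> real_of_rat \<eta>))
    \<and> (\<forall>\<eta> t. Neg (Kv i \<eta> t) \<in> \<Gamma> \<longrightarrow> (\<forall>k\<in>{1..card (T_of \<Sigma>)}.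
          (\<Sum>x\<in>{(\<Delta>, f)\<in>FC_index \<Sigma> S. f t = k}. z x) < real_of_rat \<eta>)))"

primrec Tref :: "('p, 't, 'a) form set \<Rightarrow> nat \<Rightarrow> ('p, 't, 'a) form set set" where
  "Tref \<Sigma> 0 = Types \<Sigma>"
| "Tref \<Sigma> (Suc l) = {\<Delta> \<in> Tref \<Sigma> l. \<forall>i. FC_feasible \<Sigma> \<Delta> (Tref \<Sigma> l) i}"

text \<open>The stable value of the decreasing sequence.\<close>
definition Types_star :: "('p, 't, 'a) form set \<Rightarrow> ('p, 't, 'a) form set set" where
  "Types_star \<Sigma> = (\<Inter>l. Tref \<Sigma> l)"

definition Lambda :: "'a \<Rightarrow> ('p, 't, 'a) form set \<Rightarrow> ('p, 't, 'a) form set" where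
  "Lambda i \<Gamma> = {\<phi>\<in>\<Gamma>. (\<exists>\<theta> \<psi>. \<phi> = Kn i \<theta> \<psi> \<or> \<phi> = Neg (Kn i \<theta> \<psi>))
                      \<or> (\<exists>\<eta> t. \<phi> = Kv i \<eta> t \<or> \<phi> = Neg (Kv i \<eta> t))}"

definition agent_choice :: "('p, 't, 'a) form set \<Rightarrow> (('p, 't, 'a) form set \<Rightarrow> 'a) \<Rightarrow> bool" where
  "agent_choice \<Sigma> ig \<longleftrightarrow> (\<forall>\<Gamma> l. \<Gamma> \<in> Tref \<Sigma> l \<and> \<Gamma> \<notin> Tref \<Sigma> (Suc l)
                             \<longrightarrow> \<not> FC_feasible \<Sigma> \<Gamma> (Tref \<Sigma> l) (ig \<Gamma>))"

definition star_axioms :: "('p, 't, 'a) form set \<Rightarrow> (('p, 't, 'a) form set \<Rightarrow> 'a)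
     \<Rightarrow> ('p, 't, 'a) form set" where
  "star_axioms \<Sigma> ig = {Neg (Conj (Lambda (ig \<Gamma>) \<Gamma>)) | \<Gamma>. \<Gamma> \<in> Types \<Sigma> - Types_star \<Sigma>}"

abbreviation PTKv_star :: "('p, 't, 'a) form set \<Rightarrow> (('p, 't, 'a) form set \<Rightarrow> 'a)
     \<Rightarrow> ('p, 't, 'a) form \<Rightarrow> bool" where
  "PTKv_star \<Sigma> ig \<phi> \<equiv> derivable (star_axioms \<Sigma> ig) \<phi>"

definition satisfiable_form :: "('p, 't, 'a) form \<Rightarrow> bool" where
  "satisfiable_form \<phi>0 \<longleftrightarrow> (\<exists>M w.
       is_model (M :: (nat, nat, 'a, 'p, 't) Defs.model) \<and> w \<in> W M \<and> sat M w \<phi>0)"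

end

(* Completeness via a finite canonical model.  Since chi is consistent with PTKv*(Sigma), it
   extends to a saturated subset Gamma of Sigma consistent with the extra axioms; these axioms
   refute every type removed by the refinement, so Gamma survives in Types*(Sigma).  At the
   fixpoint of the refinement every surviving type Delta admits, for each agent i, a solution of
   FC(Delta, Types*(Sigma), i).  The worlds are the pairs (Delta, f) of a surviving type and a
   coding f of its terms that realises its equalities, and agent i at (Delta, f) weighs the worlds
   by the chosen solution for Delta.  A formula of Sigma then holds at (Delta, f) iff it belongs to
   Delta: the thresholds of K are exactly the constraints of FC, and a value class of mass at
   least eta > 1/2 is unique, as the semantics of Kv requires. *)

theory Submission
  imports Defs
begin

definition consistent :: "('p, 't, 'a) form set \<Rightarrow> ('p, 't, 'a) form set \<Rightarrow> bool" where
  "consistent A \<Gamma> \<longleftrightarrow> \<not> derivable A (Neg (Conj \<Gamma>))"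

lemma derivable_mono: "derivable A \<phi> \<Longrightarrow> A \<subseteq> B \<Longrightarrow> derivable B \<phi>"
  by (induction rule: derivable.induct) (auto intro: derivable.intros)

lemma peval_conj_list: "peval v (conj_list xs) \<longleftrightarrow> (\<forall>\<phi>\<in>set xs. peval v \<phi>)"
  by (induction xs rule: conj_list.induct) (auto simp: And_def Top_def)

lemma wf_form_conj_list: "\<forall>\<phi>\<in>set xs. wf_form \<phi> \<Longrightarrow> wf_form (conj_list xs)"
  by (induction xs rule: conj_list.induct) (auto simp: And_def Top_def)

lemma set_Conj_list: "finite \<Gamma> \<Longrightarrow> set (SOME xs. set xs = \<Gamma>) = \<Gamma>"
  by (rule someI_ex) (simp add: finite_list)

lemma peval_Conj: "finite \<Gamma> \<Longrightarrow> peval v (Conj \<Gamma>) \<longleftrightarrow> (\<forall>\<phi>\<in>\<Gamma>. peval v \<phi>)"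
  unfolding Conj_def by (simp add: peval_conj_list set_Conj_list)

lemma wf_form_Conj: "finite \<Gamma> \<Longrightarrow> \<forall>\<phi>\<in>\<Gamma>. wf_form \<phi> \<Longrightarrow> wf_form (Conj \<Gamma>)"
  unfolding Conj_def by (rule wf_form_conj_list) (simp add: set_Conj_list)

lemma peval_sneg [simp]: "peval v (sneg \<phi>) \<longleftrightarrow> \<not> peval v \<phi>"
  by (cases \<phi>) auto

lemma derivable_tautological_consequence:
  assumes "finite P" and "\<forall>q\<in>P. derivable A q \<and> wf_form q" and "wf_form c"
    and "\<forall>v. (\<forall>q\<in>P. peval v q) \<longrightarrow> peval v c"
  shows "derivable A c"
  using assms
proof (induction P arbitrary: c rule: finite_induct)
  case empty
  then show ?case by (intro derivable.Ax ax.taut) (auto simp: tautology_def)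
next
  case (insert q P)
  then have "derivable A (Imp q c)" by auto
  with insert.prems show ?case by (auto intro: derivable.MP)
qed

lemma not_consistent_if_refuted:
  assumes "finite \<Gamma>" and "\<forall>\<phi>\<in>\<Gamma>. wf_form \<phi>"
    and "finite P" and "\<forall>q\<in>P. derivable A q \<and> wf_form q"
    and "\<forall>v. (\<forall>q\<in>P. peval v q) \<longrightarrow> \<not> (\<forall>\<phi>\<in>\<Gamma>. peval v \<phi>)"
  shows "\<not> consistent A \<Gamma>"
  unfolding consistent_def not_not using assms
  by (intro derivable_tautological_consequence[of P]) (auto simp: peval_Conj wf_form_Conj)

lemma consistent_subset:
  assumes "consistent A \<Gamma>" and "\<Lambda> \<subseteq> \<Gamma>" and "finite \<Gamma>" and "\<forall>\<phi>\<in>\<Gamma>. wf_form \<phi>"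
  shows "consistent A \<Lambda>"
proof (rule ccontr)
  assume "\<not> consistent A \<Lambda>"
  moreover have "finite \<Lambda>" using assms(2,3) by (rule finite_subset)
  ultimately have "\<not> consistent A \<Gamma>"
    using assms(2-4)
    by (intro not_consistent_if_refuted[of _ "{Neg (Conj \<Lambda>)}"])
       (auto simp: consistent_def peval_Conj intro!: wf_form_Conj)
  with assms(1) show False by contradiction
qed

lemma equiv_class_index:
  assumes "finite T" and "equiv T R"
  obtains f :: "'b \<Rightarrow> nat" where "\<forall>t\<in>T. f t \<in> {1..card T}"
    and "\<forall>t\<in>T. \<forall>s\<in>T. f t = f s \<longleftrightarrow> (t, s) \<in> R"
proof -
  have quot: "T // R = (\<lambda>t. R `` {t}) ` T" by (auto simp: quotient_def)
  then have "finite (T // R)" using assms(1) by simp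
  then obtain h where h: "bij_betw h (T // R) {0..<card (T // R)}"
    using ex_bij_betw_finite_nat by blast
  have "h (R `` {t}) < card (T // R)" if "t \<in> T" for t
    using bij_betwE[OF h] quotientI[OF that] by auto
  moreover have "card (T // R) \<le> card T" unfolding quot by (rule card_image_le[OF assms(1)])
  ultimately have "h (R `` {t}) + 1 \<in> {1..card T}" if "t \<in> T" for t
    using that by fastforce
  moreover have "h (R `` {t}) + 1 = h (R `` {s}) + 1 \<longleftrightarrow> (t, s) \<in> R" if "t \<in> T" "s \<in> T" for t s
    using h that eq_equiv_class_iff[OF assms(2) that]
    by (auto simp: quot bij_betw_def dest: inj_onD)
  ultimately show thesis by (intro that[of "\<lambda>t. h (R `` {t}) + 1"]) auto
qed

lemma decreasing_chain_stabilises: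
  fixes A :: "nat \<Rightarrow> 'b set"
  assumes "finite (A 0)" and "\<And>l. A (Suc l) \<subseteq> A l"
  shows "\<exists>l. A (Suc l) = A l"
proof (rule ccontr)
  assume "\<not> ?thesis"
  then have strict: "A (Suc l) \<subset> A l" for l using assms(2) by blast
  have fin: "finite (A l)" for l
    by (induction l) (use assms finite_subset in blast)+
  have "card (A l) + l \<le> card (A 0)" for l
  proof (induction l)
    case (Suc l)
    have "card (A (Suc l)) < card (A l)" by (rule psubset_card_mono[OF fin strict])
    with Suc show ?case by simp
  qed simp
  from this[of "Suc (card (A 0))"] show False by simp
qed

lemma finite_terms_of: "finite (terms_of \<phi>)"
  by (induction \<phi>) auto

lemma subforms_self: "\<phi> \<in> subforms \<phi>"
  by (cases \<phi>) auto

lemma Tref_subset_Types: "Tref \<Sigma> l \<subseteq> Types \<Sigma>"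
  by (induction l) auto

lemma Types_star_subset_Types: "Types_star \<Sigma> \<subseteq> Types \<Sigma>"
  unfolding Types_star_def using Tref_subset_Types[of \<Sigma> 0] by blast

lemma Types_star_eq_Tref:
  assumes "Tref \<Sigma> (Suc l) = Tref \<Sigma> l"
  shows "Types_star \<Sigma> = Tref \<Sigma> l"
proof -
  have "decseq (Tref \<Sigma>)" by (rule decseq_SucI) auto
  have "Tref \<Sigma> l \<subseteq> Tref \<Sigma> m" for m
  proof (cases "m \<le> l")
    case True
    with \<open>decseq (Tref \<Sigma>)\<close> show ?thesis by (rule decseqD)
  next
    case False
    have "Tref \<Sigma> (l + k) = Tref \<Sigma> l" for k
    proof (induction k)
      case (Suc k)
      have "Tref \<Sigma> (l + Suc k) = {\<Delta> \<in> Tref \<Sigma> l. \<forall>i. FC_feasible \<Sigma> \<Delta> (Tref \<Sigma> l) i}"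
        using Suc.IH by simp
      also have "\<dots> = Tref \<Sigma> l" using assms by simp
      finally show ?case .
    qed simp
    from this[of "m - l"] False show ?thesis by simp
  qed
  then show ?thesis unfolding Types_star_def by blast
qed

primrec frame_sat :: "'x set \<Rightarrow> ('a \<Rightarrow> 'x \<Rightarrow> 'x \<Rightarrow> real) \<Rightarrow> ('x \<Rightarrow> 'p \<Rightarrow> bool)
    \<Rightarrow> ('x \<Rightarrow> 't \<Rightarrow> nat) \<Rightarrow> 'x \<Rightarrow> ('p, 't, 'a) form \<Rightarrow> bool" where
  "frame_sat X p V val x (PVar q) = V x q"
| "frame_sat X p V val x (Eq t s) = (val x t = val x s)"
| "frame_sat X p V val x (Neg \<phi>) = (\<not> frame_sat X p V val x \<phi>)"
| "frame_sat X p V val x (Imp \<phi> \<psi>) = (frame_sat X p V val x \<phi> \<longrightarrow> frame_sat X p V val x \<psi>)"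
| "frame_sat X p V val x (Kn i \<theta> \<phi>) =
     ((\<Sum>y\<in>{y\<in>X. frame_sat X p V val y \<phi>}. p i x y) \<ge> real_of_rat \<theta>)"
| "frame_sat X p V val x (Kv i \<eta> t) = (\<exists>!d. (\<Sum>y\<in>{y\<in>X. val y t = d}. p i x y) \<ge> real_of_rat \<eta>)"

definition frame_model :: "'x set \<Rightarrow> ('a \<Rightarrow> 'x \<Rightarrow> 'x \<Rightarrow> real) \<Rightarrow> ('x \<Rightarrow> 'p \<Rightarrow> bool)
    \<Rightarrow> ('x \<Rightarrow> 't \<Rightarrow> nat) \<Rightarrow> (nat, nat, 'a, 'p, 't) Defs.model" where
  "frame_model X p V val = Model (to_nat_on X ` X) UNIV
     (\<lambda>i n. point_measure (to_nat_on X ` X)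
        (\<lambda>m. ennreal (p i (from_nat_into X n) (from_nat_into X m))))
     (\<lambda>n. V (from_nat_into X n)) (\<lambda>n. val (from_nat_into X n))"

context
  fixes X :: "'x set" and p :: "'a \<Rightarrow> 'x \<Rightarrow> 'x \<Rightarrow> real"
    and V :: "'x \<Rightarrow> 'p \<Rightarrow> bool" and val :: "'x \<Rightarrow> 't \<Rightarrow> nat"
  assumes fin: "finite X"
    and nonneg: "\<And>i x y. x \<in> X \<Longrightarrow> y \<in> X \<Longrightarrow> p i x y \<ge> 0"
    and sum_one: "\<And>i x. x \<in> X \<Longrightarrow> (\<Sum>y\<in>X. p i x y) = 1"
begin

lemma measure_frame_model:
  assumes "x \<in> X" and "B \<subseteq> X"
  shows "measure (Pr (frame_model X p V val) i (to_nat_on X x)) (to_nat_on X ` B) = (\<Sum>y\<in>B. p i x y)"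
proof -
  have count: "countable X" using fin by (rule countable_finite)
  then have inj: "inj_on (to_nat_on X) B" using assms(2) inj_on_subset by blast
  have "\<And>m. m \<in> to_nat_on X ` X \<Longrightarrow> 0 \<le> p i x (from_nat_into X m)"
    using nonneg assms(1) count by auto
  then have "measure (Pr (frame_model X p V val) i (to_nat_on X x)) (to_nat_on X ` B)
      = (\<Sum>m\<in>to_nat_on X ` B. p i x (from_nat_into X m))"
    unfolding frame_model_def using assms count fin
    by (simp add: measure_point_measure_finite_if[where f = "\<lambda>m. p i x (from_nat_into X m)"] image_mono)
  also have "\<dots> = (\<Sum>y\<in>B. p i x y)"
    using assms(2) count inj by (simp add: sum.reindex subset_iff)
  finally show ?thesis .
qed

lemma is_model_frame_model:
  assumes "X \<noteq> {}"
  shows "is_model (frame_model X p V val)"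
proof -
  have count: "countable X" using fin by (rule countable_finite)
  have "(\<Sum>m\<in>to_nat_on X ` X. ennreal (p i x (from_nat_into X m))) = 1" if "x \<in> X" for i x
  proof -
    have "(\<Sum>m\<in>to_nat_on X ` X. ennreal (p i x (from_nat_into X m))) = ennreal (\<Sum>y\<in>X. p i x y)"
      using count nonneg that by (simp add: sum.reindex inj_on_to_nat_on sum_ennreal)
    then show ?thesis using sum_one that by simp
  qed
  then show ?thesis
    unfolding is_model_def using assms fin count nonneg
    by (auto simp: frame_model_def space_point_measure sets_point_measure
        intro!: prob_space_point_measure)
qed

lemma sat_frame_model:
  "x \<in> X \<Longrightarrow> sat (frame_model X p V val) (to_nat_on X x) \<phi> \<longleftrightarrow> frame_sat X p V val x \<phi>"
proof (induction \<phi> arbitrary: x)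
  case (Kn i \<theta> \<phi>)
  let ?M = "frame_model X p V val"
  have "{u \<in> W ?M. sat ?M u \<phi>} = to_nat_on X ` {y\<in>X. frame_sat X p V val y \<phi>}"
    using Kn.IH by (auto simp: frame_model_def)
  with Kn.prems show ?case by (simp add: measure_frame_model)
next
  case (Kv i \<eta> t)
  let ?M = "frame_model X p V val"
  have "{u \<in> W ?M. vl ?M u t = d} = to_nat_on X ` {y\<in>X. val y t = d}" for d
    using countable_finite[OF fin] by (auto simp: frame_model_def)
  then have "measure (Pr ?M i (to_nat_on X x)) {u \<in> W ?M. vl ?M u t = d}
      = (\<Sum>y\<in>{y\<in>X. val y t = d}. p i x y)" for d
    using measure_frame_model[OF Kv.prems] by auto
  then show ?case by (simp add: frame_model_def)
qed (use countable_finite[OF fin] in \<open>auto simp: frame_model_def\<close>)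

end

lemma heavy_class_unique:
  fixes w :: "'x \<Rightarrow> real"
  assumes "finite X" and "\<forall>y\<in>X. 0 \<le> w y" and "(\<Sum>y\<in>X. w y) = 1" and "1/2 < \<eta>"
    and "\<eta> \<le> (\<Sum>y\<in>{y\<in>X. g y = d}. w y)" and "\<eta> \<le> (\<Sum>y\<in>{y\<in>X. g y = d'}. w y)"
  shows "d = d'"
proof (rule ccontr)
  assume "d \<noteq> d'"
  then have "(\<Sum>y\<in>{y\<in>X. g y = d}. w y) + (\<Sum>y\<in>{y\<in>X. g y = d'}. w y)
      = (\<Sum>y\<in>{y\<in>X. g y = d} \<union> {y\<in>X. g y = d'}. w y)"
    using assms(1) by (subst sum.union_disjoint) auto
  also have "\<dots> \<le> (\<Sum>y\<in>X. w y)"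
    using assms(1,2) by (intro sum_mono2) auto
  finally show False using assms(3-6) by linarith
qed

definition FC_solution :: "('p, 't, 'a) form set \<Rightarrow> ('p, 't, 'a) form set
     \<Rightarrow> ('p, 't, 'a) form set set \<Rightarrow> 'a \<Rightarrow> (('p, 't, 'a) form set \<times> ('t \<Rightarrow> nat) \<Rightarrow> real) \<Rightarrow> bool"
  where
  "FC_solution \<Sigma> \<Gamma> S i z \<longleftrightarrow>
      (\<forall>x\<in>FC_index \<Sigma> S. z x \<ge> 0)
    \<and> (\<Sum>x\<in>FC_index \<Sigma> S. z x) = 1
    \<and> (\<forall>\<theta> \<phi>. Kn i \<theta> \<phi> \<in> \<Gamma> \<longrightarrow>
          (\<Sum>x\<in>{(\<Delta>, f)\<in>FC_index \<Sigma> S. \<phi> \<in> \<Delta>}. z x) \<ge> real_of_rat \<theta>)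
    \<and> (\<forall>\<theta> \<phi>. Neg (Kn i \<theta> \<phi>) \<in> \<Gamma> \<longrightarrow>
          (\<Sum>x\<in>{(\<Delta>, f)\<in>FC_index \<Sigma> S. \<phi> \<in> \<Delta>}. z x) < real_of_rat \<theta>)
    \<and> (\<forall>\<eta> t. Kv i \<eta> t \<in> \<Gamma> \<longrightarrow> (\<exists>k\<in>{1..card (T_of \<Sigma>)}.
          (\<Sum>x\<in>{(\<Delta>, f)\<in>FC_index \<Sigma> S. f t = k}. z x) \<ge> real_of_rat \<eta>))
    \<and> (\<forall>\<eta> t. Neg (Kv i \<eta> t) \<in> \<Gamma> \<longrightarrow> (\<forall>k\<in>{1..card (T_of \<Sigma>)}.
          (\<Sum>x\<in>{(\<Delta>, f)\<in>FC_index \<Sigma> S. f t = k}. z x) < real_of_rat \<eta>))"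

lemma FC_feasible_iff_solution: "FC_feasible \<Sigma> \<Gamma> S i \<longleftrightarrow> (\<exists>z. FC_solution \<Sigma> \<Gamma> S i z)"
  unfolding FC_feasible_def FC_solution_def by (rule refl)

lemma FC_solutionD:
  assumes "FC_solution \<Sigma> \<Gamma> S i z"
  shows "\<forall>x\<in>FC_index \<Sigma> S. 0 \<le> z x" and "(\<Sum>x\<in>FC_index \<Sigma> S. z x) = 1"
    and "Kn i \<theta> \<phi> \<in> \<Gamma> \<Longrightarrow> real_of_rat \<theta> \<le> (\<Sum>x\<in>{(\<Delta>, f)\<in>FC_index \<Sigma> S. \<phi> \<in> \<Delta>}. z x)"
    and "Neg (Kn i \<theta> \<phi>) \<in> \<Gamma> \<Longrightarrow> (\<Sum>x\<in>{(\<Delta>, f)\<in>FC_index \<Sigma> S. \<phi> \<in> \<Delta>}. z x) < real_of_rat \<theta>"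
    and "Kv i \<eta> t \<in> \<Gamma> \<Longrightarrow>
      \<exists>k\<in>{1..card (T_of \<Sigma>)}. real_of_rat \<eta> \<le> (\<Sum>x\<in>{(\<Delta>, f)\<in>FC_index \<Sigma> S. f t = k}. z x)"
    and "Neg (Kv i \<eta> t) \<in> \<Gamma> \<Longrightarrow> k \<in> {1..card (T_of \<Sigma>)} \<Longrightarrow>
      (\<Sum>x\<in>{(\<Delta>, f)\<in>FC_index \<Sigma> S. f t = k}. z x) < real_of_rat \<eta>"
  using assms unfolding FC_solution_def by blast+

lemma FC_index_fst: "x \<in> FC_index \<Sigma> S \<Longrightarrow> fst x \<in> S"
  by (auto simp: FC_index_def)

lemma FC_index_Types_star: "x \<in> FC_index \<Sigma> (Types_star \<Sigma>) \<Longrightarrow> fst x \<in> Types \<Sigma>"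
  using FC_index_fst Types_star_subset_Types by blast

definition canon_weight :: "('p, 't, 'a) form set \<Rightarrow> 'a
     \<Rightarrow> ('p, 't, 'a) form set \<times> ('t \<Rightarrow> nat) \<Rightarrow> ('p, 't, 'a) form set \<times> ('t \<Rightarrow> nat) \<Rightarrow> real"
  where "canon_weight \<Sigma> i x = (SOME z. FC_solution \<Sigma> (fst x) (Types_star \<Sigma>) i z)"

abbreviation canon_sat :: "('p, 't, 'a) form set \<Rightarrow> ('p, 't, 'a) form set \<times> ('t \<Rightarrow> nat)
     \<Rightarrow> ('p, 't, 'a) form \<Rightarrow> bool" where
  "canon_sat \<Sigma> \<equiv> frame_sat (FC_index \<Sigma> (Types_star \<Sigma>)) (canon_weight \<Sigma>) (\<lambda>x q. PVar q \<in> fst x) snd"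

abbreviation canon_model :: "('p, 't, 'a) form set \<Rightarrow> (nat, nat, 'a, 'p, 't) Defs.model" where
  "canon_model \<Sigma> \<equiv> frame_model (FC_index \<Sigma> (Types_star \<Sigma>)) (canon_weight \<Sigma>) (\<lambda>x q. PVar q \<in> fst x) snd"

context
  fixes \<Sigma> :: "('p, 't, 'a) form set"
  assumes closure: "finite_closure \<Sigma>"
begin

lemma closure_finite: "finite \<Sigma>"
  and closure_wf: "\<phi> \<in> \<Sigma> \<Longrightarrow> wf_form \<phi>"
  and closure_subforms: "\<phi> \<in> \<Sigma> \<Longrightarrow> subforms \<phi> \<subseteq> \<Sigma>"
  and closure_Neg: "\<phi> \<in> \<Sigma> \<Longrightarrow> \<not> (\<exists>\<psi>. \<phi> = Neg \<psi> \<and> \<psi> \<in> \<Sigma>) \<Longrightarrow> Neg \<phi> \<in> \<Sigma>"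
  and closure_Eq: "t \<in> T_of \<Sigma> \<Longrightarrow> s \<in> T_of \<Sigma> \<Longrightarrow> Eq t s \<in> \<Sigma>"
  using closure unfolding finite_closure_def by auto

lemma closure_sneg:
  assumes "\<phi> \<in> \<Sigma>"
  shows "sneg \<phi> \<in> \<Sigma>"
proof (cases "\<exists>\<psi>. \<phi> = Neg \<psi>")
  case True
  then obtain \<psi> where "\<phi> = Neg \<psi>" by blast
  with closure_subforms[OF assms] subforms_self[of \<psi>] show ?thesis by auto
next
  case False
  then have "Neg \<phi> \<in> \<Sigma>" using closure_Neg[OF assms] by blast
  with False show ?thesis by (cases \<phi>) simp_all
qed

lemma finite_T_of: "finite (T_of \<Sigma>)"
  unfolding T_of_def using closure_finite by (auto simp: finite_terms_of)

lemma terms_of_in_T_of: "\<phi> \<in> \<Sigma> \<Longrightarrow> terms_of \<phi> \<subseteq> T_of \<Sigma>"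
  unfolding T_of_def by auto

lemma finite_Types: "finite (Types \<Sigma>)"
proof -
  have "Types \<Sigma> \<subseteq> Pow \<Sigma>" by (auto simp: Types_def)
  then show ?thesis by (rule finite_subset) (simp add: closure_finite)
qed

lemma finite_FC_index:
  assumes "finite S"
  shows "finite (FC_index \<Sigma> S)"
proof -
  let ?F = "{f. \<forall>t. (t \<in> T_of \<Sigma> \<longrightarrow> f t \<in> {1..card (T_of \<Sigma>)}) \<and> (t \<notin> T_of \<Sigma> \<longrightarrow> f t = 0)}"
  have "finite ?F" using finite_T_of by (intro finite_set_of_finite_funs) auto
  with assms have "finite (S \<times> ?F)" by simp
  moreover have "FC_index \<Sigma> S \<subseteq> S \<times> ?F" by (auto simp: FC_index_def Fs_def)
  ultimately show ?thesis by (rule finite_subset[rotated])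
qed

lemma Types_valuation:
  assumes "\<Delta> \<in> Types \<Sigma>" and "finite P" and "\<forall>q\<in>P. PTKv_plus q \<and> wf_form q"
  obtains v where "\<forall>q\<in>P. peval v q" and "\<forall>\<phi>\<in>\<Sigma>. \<phi> \<in> \<Delta> \<longleftrightarrow> peval v \<phi>"
proof -
  have \<Delta>: "\<Delta> \<subseteq> \<Sigma>" "consistent {} \<Delta>" "\<forall>\<phi>\<in>\<Sigma>. \<phi> \<in> \<Delta> \<or> sneg \<phi> \<in> \<Delta>"
    using assms(1) by (auto simp: Types_def consistent_def)
  have fin: "finite \<Delta>" using \<Delta>(1) closure_finite finite_subset by blast
  have wf: "\<forall>\<phi>\<in>\<Delta>. wf_form \<phi>" using \<Delta>(1) closure_wf by blast
  obtain v where v: "\<forall>q\<in>P. peval v q" "\<forall>\<phi>\<in>\<Delta>. peval v \<phi>"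
    using not_consistent_if_refuted[OF fin wf assms(2,3)] \<Delta>(2) by blast
  have "\<phi> \<in> \<Delta> \<longleftrightarrow> peval v \<phi>" if "\<phi> \<in> \<Sigma>" for \<phi>
  proof
    assume "peval v \<phi>"
    show "\<phi> \<in> \<Delta>"
    proof (rule ccontr)
      assume "\<phi> \<notin> \<Delta>"
      with \<Delta>(3) that have "sneg \<phi> \<in> \<Delta>" by blast
      with v(2) \<open>peval v \<phi>\<close> show False by fastforce
    qed
  qed (use v(2) in blast)
  with v(1) show thesis by (intro that[of v]) simp_all
qed

lemma Types_Neg_iff:
  assumes "\<Delta> \<in> Types \<Sigma>" and "Neg \<phi> \<in> \<Sigma>"
  shows "Neg \<phi> \<in> \<Delta> \<longleftrightarrow> \<phi> \<notin> \<Delta>"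
proof -
  obtain v where "\<forall>\<psi>\<in>\<Sigma>. \<psi> \<in> \<Delta> \<longleftrightarrow> peval v \<psi>"
    by (rule Types_valuation[OF assms(1), of "{}"]) auto
  moreover have "\<phi> \<in> \<Sigma>" using closure_subforms[OF assms(2)] subforms_self by auto
  ultimately show ?thesis using assms(2) by simp
qed

lemma Types_Imp_iff:
  assumes "\<Delta> \<in> Types \<Sigma>" and "Imp \<phi> \<psi> \<in> \<Sigma>"
  shows "Imp \<phi> \<psi> \<in> \<Delta> \<longleftrightarrow> (\<phi> \<in> \<Delta> \<longrightarrow> \<psi> \<in> \<Delta>)"
proof -
  obtain v where "\<forall>\<xi>\<in>\<Sigma>. \<xi> \<in> \<Delta> \<longleftrightarrow> peval v \<xi>"
    by (rule Types_valuation[OF assms(1), of "{}"]) auto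
  moreover have "\<phi> \<in> \<Sigma>" "\<psi> \<in> \<Sigma>"
    using closure_subforms[OF assms(2)] subforms_self by auto
  ultimately show ?thesis using assms(2) by simp
qed

lemma Types_Eq_equiv:
  assumes "\<Delta> \<in> Types \<Sigma>"
  shows "equiv (T_of \<Sigma>) {(t, s). t \<in> T_of \<Sigma> \<and> s \<in> T_of \<Sigma> \<and> Eq t s \<in> \<Delta>}"
    (is "equiv ?T ?R")
proof -
  have valuation: "\<exists>v. peval v q \<and> (\<forall>\<phi>\<in>\<Sigma>. \<phi> \<in> \<Delta> \<longleftrightarrow> peval v \<phi>)" if "ax q" and "wf_form q" for q
    by (rule Types_valuation[OF assms, of "{q}"]) (use that in \<open>auto intro: derivable.Ax\<close>)
  have Eq_refl: "Eq t t \<in> \<Delta>" if "t \<in> ?T" for t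
  proof -
    obtain v where "peval v (Eq t t)" and decides: "\<forall>\<phi>\<in>\<Sigma>. \<phi> \<in> \<Delta> \<longleftrightarrow> peval v \<phi>"
      using valuation[OF ax.eq_refl[of t]] by auto
    with bspec[OF decides closure_Eq[OF that that]] show ?thesis by simp
  qed
  have Eq_sym: "Eq s t \<in> \<Delta>" if "t \<in> ?T" "s \<in> ?T" "Eq t s \<in> \<Delta>" for t s
  proof -
    obtain v where "peval v (Imp (Eq t s) (Eq s t))"
      and decides: "\<forall>\<phi>\<in>\<Sigma>. \<phi> \<in> \<Delta> \<longleftrightarrow> peval v \<phi>"
      using valuation[OF ax.eq_sym[of t s]] by auto
    with that(3) bspec[OF decides closure_Eq[OF that(1,2)]] bspec[OF decides closure_Eq[OF that(2,1)]]
    show ?thesis by simp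
  qed
  have Eq_trans: "Eq t u \<in> \<Delta>"
    if "t \<in> ?T" "s \<in> ?T" "u \<in> ?T" "Eq t s \<in> \<Delta>" "Eq s u \<in> \<Delta>" for t s u
  proof -
    obtain v where "peval v (Imp (And (Eq t s) (Eq s u)) (Eq t u))"
      and decides: "\<forall>\<phi>\<in>\<Sigma>. \<phi> \<in> \<Delta> \<longleftrightarrow> peval v \<phi>"
      using valuation[OF ax.eq_trans[of t s u]] by (auto simp: And_def)
    with that(4,5) bspec[OF decides closure_Eq[OF that(1,2)]] bspec[OF decides closure_Eq[OF that(2,3)]]
      bspec[OF decides closure_Eq[OF that(1,3)]]
    show ?thesis by (simp add: And_def)
  qed
  show ?thesis
  proof (rule equivI)
    show "?R \<subseteq> ?T \<times> ?T" by auto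
    show "refl_on ?T ?R" unfolding refl_on_def using Eq_refl by blast
    show "sym ?R" unfolding sym_def using Eq_sym by blast
    show "trans ?R" unfolding trans_def using Eq_trans by blast
  qed
qed

lemma Fs_nonempty:
  assumes "\<Delta> \<in> Types \<Sigma>"
  obtains f where "f \<in> Fs \<Sigma> \<Delta>"
proof -
  obtain g where g: "\<forall>t\<in>T_of \<Sigma>. g t \<in> {1..card (T_of \<Sigma>)}"
    "\<forall>t\<in>T_of \<Sigma>. \<forall>s\<in>T_of \<Sigma>. g t = g s \<longleftrightarrow> Eq t s \<in> \<Delta>"
    using equiv_class_index[OF finite_T_of Types_Eq_equiv[OF assms]] by auto
  show thesis
    by (rule that[of "\<lambda>t. if t \<in> T_of \<Sigma> then g t else 0"]) (use g in \<open>auto simp: Fs_def\<close>)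
qed

lemma Types_star_feasible:
  assumes "\<Delta> \<in> Types_star \<Sigma>"
  shows "FC_feasible \<Sigma> \<Delta> (Types_star \<Sigma>) i"
proof -
  obtain l where l: "Tref \<Sigma> (Suc l) = Tref \<Sigma> l"
    using decreasing_chain_stabilises[of "Tref \<Sigma>"] finite_Types by auto
  have star: "Types_star \<Sigma> = Tref \<Sigma> l" by (rule Types_star_eq_Tref[OF l])
  have "\<Delta> \<in> Tref \<Sigma> (Suc l)" using assms unfolding star l .
  then show ?thesis unfolding star by simp
qed

lemma consistent_insert_either:
  assumes "consistent A \<Gamma>" and "\<Gamma> \<subseteq> \<Sigma>" and "\<phi> \<in> \<Sigma>"
  shows "consistent A (insert \<phi> \<Gamma>) \<or> consistent A (insert (sneg \<phi>) \<Gamma>)"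
proof (rule ccontr)
  let ?P = "{Neg (Conj (insert \<phi> \<Gamma>)), Neg (Conj (insert (sneg \<phi>) \<Gamma>))}"
  assume "\<not> ?thesis"
  then have derivable: "\<forall>q\<in>?P. derivable A q" by (simp add: consistent_def)
  have fin: "finite \<Gamma>" using assms(2) closure_finite finite_subset by blast
  have wf: "\<forall>\<psi>\<in>insert \<phi> (insert (sneg \<phi>) \<Gamma>). wf_form \<psi>"
    using assms(2,3) closure_wf closure_sneg by blast
  then have "\<forall>q\<in>?P. wf_form q" using fin by (simp add: wf_form_Conj)
  then have "\<not> consistent A \<Gamma>"
    using fin wf derivable by (intro not_consistent_if_refuted[of _ ?P]) (auto simp: peval_Conj)
  with assms(1) show False by contradiction
qed

lemma lindenbaum:
  assumes "chi \<in> \<Sigma>" and "\<not> derivable A (Neg chi)"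
  obtains \<Gamma> where "chi \<in> \<Gamma>" and "\<Gamma> \<subseteq> \<Sigma>" and "consistent A \<Gamma>"
    and "\<forall>\<phi>\<in>\<Sigma>. \<phi> \<in> \<Gamma> \<or> sneg \<phi> \<in> \<Gamma>"
proof -
  have "\<exists>\<Gamma>. chi \<in> \<Gamma> \<and> \<Gamma> \<subseteq> \<Sigma> \<and> consistent A \<Gamma> \<and> (\<forall>\<phi>\<in>F. \<phi> \<in> \<Gamma> \<or> sneg \<phi> \<in> \<Gamma>)"
    if "F \<subseteq> \<Sigma>" for F
    using finite_subset[OF that closure_finite] that
  proof (induction F rule: finite_subset_induct)
    case empty
    have "consistent A {chi}"
    proof (rule ccontr)
      assume "\<not> consistent A {chi}"
      then have "derivable A (Neg chi)"
        using closure_wf[OF assms(1)]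
        by (intro derivable_tautological_consequence[of "{Neg (Conj {chi})}"])
           (auto simp: consistent_def peval_Conj wf_form_Conj)
      with assms(2) show False by contradiction
    qed
    with assms(1) show ?case by blast
  next
    case (insert \<phi> F)
    then obtain \<Gamma> where \<Gamma>: "chi \<in> \<Gamma>" "\<Gamma> \<subseteq> \<Sigma>" "consistent A \<Gamma>"
      "\<forall>\<psi>\<in>F. \<psi> \<in> \<Gamma> \<or> sneg \<psi> \<in> \<Gamma>"
      by blast
    from consistent_insert_either[OF \<Gamma>(3,2) insert.hyps(2)] show ?case
    proof
      assume "consistent A (insert \<phi> \<Gamma>)"
      with \<Gamma> insert.hyps(2) show ?case by (intro exI[of _ "insert \<phi> \<Gamma>"]) auto
    next
      assume "consistent A (insert (sneg \<phi>) \<Gamma>)"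
      with \<Gamma> closure_sneg[OF insert.hyps(2)] show ?case
        by (intro exI[of _ "insert (sneg \<phi>) \<Gamma>"]) auto
    qed
  qed
  with that show thesis by blast
qed

lemma finite_canon_index: "finite (FC_index \<Sigma> (Types_star \<Sigma>))"
  using finite_FC_index finite_subset[OF Types_star_subset_Types finite_Types] .

lemma canon_weight_solution:
  assumes "x \<in> FC_index \<Sigma> (Types_star \<Sigma>)"
  shows "FC_solution \<Sigma> (fst x) (Types_star \<Sigma>) i (canon_weight \<Sigma> i x)"
proof -
  have "\<exists>z. FC_solution \<Sigma> (fst x) (Types_star \<Sigma>) i z"
    using Types_star_feasible[OF FC_index_fst[OF assms]] unfolding FC_feasible_iff_solution .
  then show ?thesis unfolding canon_weight_def by (rule someI_ex)
qed

lemma canon_sat_Kn: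
  assumes x: "x \<in> FC_index \<Sigma> (Types_star \<Sigma>)" and Kn: "Kn i \<theta> \<phi> \<in> \<Sigma>"
    and IH: "\<forall>y\<in>FC_index \<Sigma> (Types_star \<Sigma>). canon_sat \<Sigma> y \<phi> \<longleftrightarrow> \<phi> \<in> fst y"
  shows "canon_sat \<Sigma> x (Kn i \<theta> \<phi>) \<longleftrightarrow> Kn i \<theta> \<phi> \<in> fst x"
proof -
  let ?X = "FC_index \<Sigma> (Types_star \<Sigma>)"
  let ?mass = "\<Sum>y\<in>{(\<Delta>, f)\<in>?X. \<phi> \<in> \<Delta>}. canon_weight \<Sigma> i x y"
  have "{y\<in>?X. canon_sat \<Sigma> y \<phi>} = {y\<in>?X. \<phi> \<in> fst y}" using IH by blast
  also have "\<dots> = {(\<Delta>, f)\<in>?X. \<phi> \<in> \<Delta>}" by auto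
  finally have sat: "canon_sat \<Sigma> x (Kn i \<theta> \<phi>) \<longleftrightarrow> ?mass \<ge> real_of_rat \<theta>" by simp
  note solution = canon_weight_solution[OF x, of i]
  show ?thesis
  proof (cases "Kn i \<theta> \<phi> \<in> fst x")
    case True
    then have "?mass \<ge> real_of_rat \<theta>" by (rule FC_solutionD(3)[OF solution])
    with True sat show ?thesis by simp
  next
    case False
    have "fst x \<in> Types \<Sigma>" using FC_index_Types_star[OF x] .
    moreover have "Neg (Kn i \<theta> \<phi>) \<in> \<Sigma>" using closure_sneg[OF Kn] by simp
    ultimately have "Neg (Kn i \<theta> \<phi>) \<in> fst x" using False Types_Neg_iff by blast
    then have "?mass < real_of_rat \<theta>" by (rule FC_solutionD(4)[OF solution])
    with False sat show ?thesis by simp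
  qed
qed

lemma canon_sat_Kv:
  assumes x: "x \<in> FC_index \<Sigma> (Types_star \<Sigma>)" and Kv: "Kv i \<eta> t \<in> \<Sigma>"
  shows "canon_sat \<Sigma> x (Kv i \<eta> t) \<longleftrightarrow> Kv i \<eta> t \<in> fst x"
proof -
  let ?X = "FC_index \<Sigma> (Types_star \<Sigma>)"
  let ?mass = "\<lambda>k. \<Sum>y\<in>{(\<Delta>, f)\<in>?X. f t = k}. canon_weight \<Sigma> i x y"
  have mass: "{y\<in>?X. snd y t = k} = {(\<Delta>, f)\<in>?X. f t = k}" for k by auto
  have sat: "canon_sat \<Sigma> x (Kv i \<eta> t) \<longleftrightarrow> (\<exists>!k. ?mass k \<ge> real_of_rat \<eta>)"
    by (simp add: mass)
  have "1/2 < \<eta>" using closure_wf[OF Kv] by simp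
  then have \<eta>: "1/2 < real_of_rat \<eta>" by (metis of_rat_less of_rat_divide of_rat_1 of_rat_numeral_eq)
  note solution = canon_weight_solution[OF x, of i]
  note nonneg = FC_solutionD(1)[OF solution] and total = FC_solutionD(2)[OF solution]
  have unique: "k = k'" if "?mass k \<ge> real_of_rat \<eta>" and "?mass k' \<ge> real_of_rat \<eta>" for k k'
    using that unfolding mass[symmetric]
    by (rule heavy_class_unique[OF finite_canon_index nonneg total \<eta>])
  show ?thesis
  proof (cases "Kv i \<eta> t \<in> fst x")
    case True
    then obtain k where "?mass k \<ge> real_of_rat \<eta>" using FC_solutionD(5)[OF solution] by blast
    with unique have "\<exists>!k. ?mass k \<ge> real_of_rat \<eta>" by blast
    with True sat show ?thesis by simp
  next
    case False
    have "fst x \<in> Types \<Sigma>" using FC_index_Types_star[OF x] .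
    moreover have "Neg (Kv i \<eta> t) \<in> \<Sigma>" using closure_sneg[OF Kv] by simp
    ultimately have Neg: "Neg (Kv i \<eta> t) \<in> fst x" using False Types_Neg_iff by blast
    have "?mass k < real_of_rat \<eta>" for k
    proof (cases "k \<in> {1..card (T_of \<Sigma>)}")
      case True
      with Neg show ?thesis by (rule FC_solutionD(6)[OF solution])
    next
      case False
      have "t \<in> T_of \<Sigma>" using terms_of_in_T_of[OF Kv] by simp
      with False have empty: "{(\<Delta>, f)\<in>?X. f t = k} = {}" by (auto simp: FC_index_def Fs_def)
      show ?thesis unfolding empty sum.empty using \<eta> by linarith
    qed
    then have "\<not> (\<exists>!k. ?mass k \<ge> real_of_rat \<eta>)" by (meson not_le)
    with False sat show ?thesis by simp
  qed
qed

lemma canon_truth: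
  assumes "\<phi> \<in> \<Sigma>" and "x \<in> FC_index \<Sigma> (Types_star \<Sigma>)"
  shows "canon_sat \<Sigma> x \<phi> \<longleftrightarrow> \<phi> \<in> fst x"
  using assms
proof (induction \<phi> arbitrary: x)
  case (Eq t s)
  have "snd x \<in> Fs \<Sigma> (fst x)" using Eq.prems(2) by (auto simp: FC_index_def)
  moreover have "{t, s} \<subseteq> T_of \<Sigma>" using terms_of_in_T_of[OF Eq.prems(1)] by simp
  ultimately show ?case by (simp add: Fs_def)
next
  case (Neg \<phi>)
  have "\<phi> \<in> \<Sigma>" using closure_subforms[OF Neg.prems(1)] subforms_self by auto
  moreover have "fst x \<in> Types \<Sigma>" using FC_index_Types_star[OF Neg.prems(2)] .
  ultimately show ?case using Neg Types_Neg_iff by simp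
next
  case (Imp \<phi> \<psi>)
  have "\<phi> \<in> \<Sigma>" "\<psi> \<in> \<Sigma>"
    using closure_subforms[OF Imp.prems(1)] subforms_self by auto
  moreover have "fst x \<in> Types \<Sigma>" using FC_index_Types_star[OF Imp.prems(2)] .
  ultimately show ?case using Imp Types_Imp_iff by simp
next
  case (Kn i \<theta> \<phi>)
  have "\<phi> \<in> \<Sigma>" using closure_subforms[OF Kn.prems(1)] subforms_self by auto
  with Kn show ?case by (intro canon_sat_Kn) auto
next
  case (Kv i \<eta> t)
  then show ?case by (rule canon_sat_Kv[rotated])
qed simp

lemma canon_weight_nonneg: "x \<in> FC_index \<Sigma> (Types_star \<Sigma>) \<Longrightarrow> y \<in> FC_index \<Sigma> (Types_star \<Sigma>)
    \<Longrightarrow> 0 \<le> canon_weight \<Sigma> i x y"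
  using FC_solutionD(1)[OF canon_weight_solution] by blast

lemma canon_weight_sum: "x \<in> FC_index \<Sigma> (Types_star \<Sigma>)
    \<Longrightarrow> (\<Sum>y\<in>FC_index \<Sigma> (Types_star \<Sigma>). canon_weight \<Sigma> i x y) = 1"
  using FC_solutionD(2)[OF canon_weight_solution] .

lemma is_model_canon_model: "FC_index \<Sigma> (Types_star \<Sigma>) \<noteq> {} \<Longrightarrow> is_model (canon_model \<Sigma>)"
  by (rule is_model_frame_model[OF finite_canon_index, where p = "canon_weight \<Sigma>",
        OF canon_weight_nonneg canon_weight_sum])

lemma sat_canon_model:
  assumes "x \<in> FC_index \<Sigma> (Types_star \<Sigma>)" and "\<phi> \<in> \<Sigma>"
  shows "sat (canon_model \<Sigma>) (to_nat_on (FC_index \<Sigma> (Types_star \<Sigma>)) x) \<phi> \<longleftrightarrow> \<phi> \<in> fst x"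
  using sat_frame_model[OF finite_canon_index, where p = "canon_weight \<Sigma>",
      OF canon_weight_nonneg canon_weight_sum assms(1), of "\<lambda>x q. PVar q \<in> fst x" snd \<phi>]
    canon_truth[OF assms(2,1)] by (rule trans)

lemma star_consistent_in_Types_star:
  assumes "\<Gamma> \<subseteq> \<Sigma>" and consistent: "consistent (star_axioms \<Sigma> ig) \<Gamma>"
    and "\<forall>\<phi>\<in>\<Sigma>. \<phi> \<in> \<Gamma> \<or> sneg \<phi> \<in> \<Gamma>"
  shows "\<Gamma> \<in> Types_star \<Sigma>"
proof -
  have fin: "finite \<Gamma>" using assms(1) closure_finite finite_subset by blast
  have wf: "\<forall>\<phi>\<in>\<Gamma>. wf_form \<phi>" using assms(1) closure_wf by blast
  have "consistent {} \<Gamma>"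
    using consistent derivable_mono[of "{}" _ "star_axioms \<Sigma> ig"] by (auto simp: consistent_def)
  with assms(1,3) have \<Gamma>: "\<Gamma> \<in> Types \<Sigma>" by (simp add: Types_def consistent_def)
  show ?thesis
  proof (rule ccontr)
    assume "\<Gamma> \<notin> Types_star \<Sigma>"
    with \<Gamma> have "Neg (Conj (Lambda (ig \<Gamma>) \<Gamma>)) \<in> star_axioms \<Sigma> ig"
      by (auto simp: star_axioms_def)
    then have "\<not> consistent (star_axioms \<Sigma> ig) (Lambda (ig \<Gamma>) \<Gamma>)"
      unfolding consistent_def by (blast intro: derivable.Extra)
    moreover have "Lambda (ig \<Gamma>) \<Gamma> \<subseteq> \<Gamma>" by (auto simp: Lambda_def)
    ultimately show False using consistent_subset[OF consistent _ fin wf] by blast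
  qed
qed

end

theorem theorem2:
  fixes chi :: "('p::countable, 't::countable, 'a::finite) form"
    and \<Sigma> :: "('p, 't, 'a) form set"
    and ig :: "('p, 't, 'a) form set \<Rightarrow> 'a"
  assumes "finite_closure \<Sigma>"
    and "chi \<in> \<Sigma>"
    and "agent_choice \<Sigma> ig"
    and "\<not> PTKv_star \<Sigma> ig (Neg chi)"
  shows "satisfiable_form chi"
proof -
  \<comment> \<open>Admissibility of ig is needed for soundness only: completeness uses just that every
    extra axiom refutes a type that does not survive the refinement.\<close>
  obtain \<Gamma> where "chi \<in> \<Gamma>" and maximal: "\<Gamma> \<subseteq> \<Sigma>" "consistent (star_axioms \<Sigma> ig) \<Gamma>"
    "\<forall>\<phi>\<in>\<Sigma>. \<phi> \<in> \<Gamma> \<or> sneg \<phi> \<in> \<Gamma>"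
    by (rule lindenbaum[OF assms(1,2,4)])
  have \<Gamma>: "\<Gamma> \<in> Types_star \<Sigma>" by (rule star_consistent_in_Types_star[OF assms(1) maximal])
  then have "\<Gamma> \<in> Types \<Sigma>" using Types_star_subset_Types by blast
  then obtain f where "f \<in> Fs \<Sigma> \<Gamma>" by (rule Fs_nonempty[OF assms(1)])
  with \<Gamma> have world: "(\<Gamma>, f) \<in> FC_index \<Sigma> (Types_star \<Sigma>)" by (simp add: FC_index_def)
  let ?w = "to_nat_on (FC_index \<Sigma> (Types_star \<Sigma>)) (\<Gamma>, f)"
  have "is_model (canon_model \<Sigma>)" using world by (intro is_model_canon_model[OF assms(1)]) blast
  moreover have "?w \<in> W (canon_model \<Sigma>)" using world by (simp add: frame_model_def)
  moreover have "sat (canon_model \<Sigma>) ?w chi"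
    using sat_canon_model[OF assms(1) world assms(2)] \<open>chi \<in> \<Gamma>\<close> by simp
  ultimately show ?thesis unfolding satisfiable_form_def by blast
qed

end
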